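(* For every $i\ge0$, the generating function $g_i(z)=\sum_{n\ge0}b_{n,i}z^n$ of reversed partial ternary paths ending at level $i$ ($b_{n,i}$ the number of such paths of length $n$, no upper height bound) is $$g_i(z)=\frac{(-1)^i z^{2i}}{(1-t)^{i+1}}\sum_{0\le k\le i/2}(-1)^k\binom{i-k}{k}\frac{1}{t^k(t-1)^{i-k}},$$ equivalently $$g_i(z)=\frac{(-1)^iz^{2i}}{(1-t)^{i+1}(3t-4)}\Big[(t-2)(\mu_2^i+\mu_3^i)+(\mu_2^{i-1}+\mu_3^{i-1})\Big],$$ where $t$ is the formal power series in $x=z^3$ with $t(1-t)^2=x$, $t=x+2x^2+\cdots$, and $\mu_{2,3}=\dfrac{t\pm\sqrt{4t-3t^2}}{2t(t-1)}$. In particular $g_i(z)$ has nonzero coefficients only at powers $z^n$ with $n+i\equiv0\pmod 3$.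
   Context: A reversed partial ternary path of length $n$ is a lattice path $(0,c_0),\dots,(n,c_n)$ with $c_0=0$, steps $(1,2)$ or $(1,-1)$, and all $c_j\ge0$; it ends at level $c_n$. *)

theory Defs
  imports Complex_Main "HOL-Computational_Algebra.Formal_Laurent_Series"
begin

text \<open>Reversed partial ternary paths of length n, represented by their list of
  levels c_0, ..., c_n: c_0 = 0, each step changes the level by +2 or -1,
  and all levels are nonnegative.\<close>
definition rpt_paths :: "nat \<Rightarrow> int list set" where
  "rpt_paths n = {c. length c = Suc n \<and> c ! 0 = 0
      \<and> (\<forall>j<n. c ! Suc j - c ! j = 2 \<or> c ! Suc j - c ! j = -1)
      \<and> (\<forall>j\<le>n. 0 \<le> c ! j)}"

definition b_count :: "nat \<Rightarrow> nat \<Rightarrow> nat" where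
  "b_count n i = card {c \<in> rpt_paths n. c ! n = int i}"

definition g_gf :: "nat \<Rightarrow> real fps" where
  "g_gf i = Abs_fps (\<lambda>n. real (b_count n i))"

definition is_field_hom :: "('a::field \<Rightarrow> 'b::field) \<Rightarrow> bool" where
  "is_field_hom \<phi> \<longleftrightarrow> \<phi> 1 = 1 \<and> (\<forall>a b. \<phi> (a + b) = \<phi> a + \<phi> b)
      \<and> (\<forall>a b. \<phi> (a * b) = \<phi> a * \<phi> b)"

end

theory Submission
  imports Defs
begin

text \<open>Deleting the last step of a path gives b(n+1, i) = b(n, i+1) + b(n, i-2), i.e.
  g_i = [i = 0] + z (g_(i+1) + g_(i-2)), a system with a unique power series solution.
  If B = 1 + (z B)^3 and w = z B, it is solved by g_i = B P_i(w), where P_0 = 1, P_1 = w^2 and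
  P_(i+2) = w^2 P_(i+1) + w P_i. With B = 1/(1 - t), t (1 - t)^2 = z^3, rescaling by powers of
  -z^2/(1 - t) turns P_i into the bivariate Fibonacci polynomial F_i(1/(t - 1), -1/(t (t - 1))).
  Its explicit binomial sum gives the first formula, and its Binet form in the roots
  mu_2, mu_3 of the characteristic polynomial gives the second.\<close>

lemma rpt_paths_nonneg: "c \<in> rpt_paths n \<Longrightarrow> j \<le> n \<Longrightarrow> 0 \<le> c ! j"
  by (simp add: rpt_paths_def)

lemma rpt_paths_le_double: "c \<in> rpt_paths n \<Longrightarrow> j \<le> n \<Longrightarrow> c ! j \<le> 2 * int j"
proof (induction j)
  case (Suc j)
  then have "c ! Suc j - c ! j = 2 \<or> c ! Suc j - c ! j = -1" by (simp add: rpt_paths_def)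
  with Suc show ?case by auto
qed (simp add: rpt_paths_def)

lemma finite_rpt_paths: "finite (rpt_paths n)"
proof (rule finite_subset)
  show "rpt_paths n \<subseteq> {c. set c \<subseteq> {0..2 * int n} \<and> length c = Suc n}"
  proof (safe)
    fix c x assume c: "c \<in> rpt_paths n" and "x \<in> set c"
    then obtain j where "j \<le> n" "x = c ! j"
      by (auto simp: in_set_conv_nth rpt_paths_def less_Suc_eq_le)
    then show "x \<in> {0..2 * int n}"
      using rpt_paths_nonneg[OF c, of j] rpt_paths_le_double[OF c, of j] by auto
  qed (simp add: rpt_paths_def)
  show "finite {c. set c \<subseteq> {0..2 * int n} \<and> length c = Suc n}"
    by (rule finite_lists_length_eq) simp
qed

lemma rpt_paths_Suc_ending_at:
  "{c \<in> rpt_paths (Suc n). c ! Suc n = x} =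
   (\<lambda>d. d @ [x]) ` {d \<in> rpt_paths n. 0 \<le> x \<and> (x - d ! n = 2 \<or> x - d ! n = -1)}"
proof (intro equalityI subsetI)
  fix c assume "c \<in> {c \<in> rpt_paths (Suc n). c ! Suc n = x}"
  then have c: "c \<in> rpt_paths (Suc n)" and cx: "c ! Suc n = x" by auto
  have len: "length c = Suc (Suc n)" using c by (simp add: rpt_paths_def)
  define d where "d = take (Suc n) c"
  have "c = d @ [x]" unfolding d_def using len cx
    by (metis append_take_drop_id Cons_nth_drop_Suc lessI drop_all order_refl)
  moreover have dj: "d ! j = c ! j" if "j \<le> n" for j using that by (simp add: d_def)
  moreover have "length d = Suc n" using len by (simp add: d_def)
  then have "d \<in> rpt_paths n" using c unfolding rpt_paths_def by (auto simp: dj)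
  moreover have "0 \<le> x \<and> (x - d ! n = 2 \<or> x - d ! n = -1)"
    using c cx dj[of n] unfolding rpt_paths_def by auto
  ultimately show "c \<in> (\<lambda>d. d @ [x]) `
                       {d \<in> rpt_paths n. 0 \<le> x \<and> (x - d ! n = 2 \<or> x - d ! n = -1)}"
    by blast
next
  fix c assume "c \<in> (\<lambda>d. d @ [x]) ` {d \<in> rpt_paths n. 0 \<le> x \<and> (x - d ! n = 2 \<or> x - d ! n = -1)}"
  then obtain d where d: "d \<in> rpt_paths n" "0 \<le> x" "x - d ! n = 2 \<or> x - d ! n = -1"
    and c: "c = d @ [x]" by auto
  have nth: "c ! j = (if j \<le> n then d ! j else x)" if "j \<le> Suc n" for j
    using d(1) that unfolding c by (auto simp: nth_append rpt_paths_def)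
  have "c \<in> rpt_paths (Suc n)" unfolding rpt_paths_def
  proof (intro CollectI conjI allI impI)
    show "length c = Suc (Suc n)" "c ! 0 = 0"
      using d(1) nth[of 0] by (simp_all add: c rpt_paths_def)
    show "c ! Suc j - c ! j = 2 \<or> c ! Suc j - c ! j = -1" if "j < Suc n" for j
      using d that nth[of j] nth[of "Suc j"] unfolding rpt_paths_def by (cases "j = n") auto
    show "0 \<le> c ! j" if "j \<le> Suc n" for j
      using d that nth[of j] unfolding rpt_paths_def by auto
  qed
  then show "c \<in> {c \<in> rpt_paths (Suc n). c ! Suc n = x}" using nth[of "Suc n"] by simp
qed

lemma b_count_0: "b_count 0 i = (if i = 0 then 1 else 0)"
proof -
  have "{c \<in> rpt_paths 0. c ! 0 = int i} = (if i = 0 then {[0]} else {})"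
    by (auto simp: rpt_paths_def length_Suc_conv)
  then show ?thesis by (simp add: b_count_def)
qed

lemma b_count_Suc:
  "b_count (Suc n) i = b_count n (Suc i) + (if 2 \<le> i then b_count n (i - 2) else 0)"
proof -
  let ?S = "{d \<in> rpt_paths n. 0 \<le> int i \<and> (int i - d ! n = 2 \<or> int i - d ! n = -1)}"
  let ?S1 = "{d \<in> rpt_paths n. d ! n = int (Suc i)}"
  let ?S2 = "{d \<in> rpt_paths n. d ! n = int i - 2}"
  have "b_count (Suc n) i = card ((\<lambda>d. d @ [int i]) ` ?S)"
    unfolding b_count_def rpt_paths_Suc_ending_at ..
  also have "\<dots> = card ?S" by (rule card_image) (auto simp: inj_on_def)
  also have "?S = ?S1 \<union> ?S2" by auto
  also have "card (?S1 \<union> ?S2) = card ?S1 + card ?S2"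
    by (rule card_Un_disjoint) (auto intro: finite_subset[OF _ finite_rpt_paths])
  also have "card ?S2 = (if 2 \<le> i then b_count n (i - 2) else 0)"
  proof (cases "2 \<le> i")
    case True
    then have "int i - 2 = int (i - 2)" by simp
    then show ?thesis using True by (simp add: b_count_def)
  next
    case False
    then have "?S2 = {}" using rpt_paths_nonneg[of _ n n] by force
    then show ?thesis using False by (simp del: Collect_empty_eq)
  qed
  finally show ?thesis by (simp add: b_count_def)
qed

lemma b_count_nonzero_imp_mod_3: "b_count n i \<noteq> 0 \<Longrightarrow> (n + i) mod 3 = 0"
proof (induction n arbitrary: i)
  case (Suc n)
  then consider "b_count n (Suc i) \<noteq> 0" | "2 \<le> i" "b_count n (i - 2) \<noteq> 0"
    by (fastforce simp: b_count_Suc split: if_splits)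
  then show ?case
  proof cases
    case 1
    with Suc.IH[of "Suc i"] show ?thesis by simp
  next
    case 2
    with Suc.IH[of "i - 2"] show ?thesis by presburger
  qed
qed (simp add: b_count_0 split: if_splits)

fun lin_rec2 :: "'a::comm_semiring_1 \<Rightarrow> 'a \<Rightarrow> 'a \<Rightarrow> 'a \<Rightarrow> nat \<Rightarrow> 'a" where
  "lin_rec2 p q a b 0 = a"
| "lin_rec2 p q a b (Suc 0) = b"
| "lin_rec2 p q a b (Suc (Suc i)) = p * lin_rec2 p q a b (Suc i) + q * lin_rec2 p q a b i"

lemma lin_rec2_unique:
  assumes "X 0 = a" "X 1 = b" "\<And>i. X (Suc (Suc i)) = p * X (Suc i) + q * X i"
  shows "X i = lin_rec2 p q a b i"
  by (induction i rule: lin_rec2.induct[of "\<lambda>_ _ _ _ i. X i = lin_rec2 p q a b i" p q a b])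
    (simp_all add: assms[unfolded One_nat_def])

lemma lin_rec2_hom:
  assumes "\<And>x y. f (x + y) = f x + f y" "\<And>x y. f (x * y) = f x * f y"
  shows "f (lin_rec2 p q a b i) = lin_rec2 (f p) (f q) (f a) (f b) i"
  by (induction p q a b i rule: lin_rec2.induct) (simp_all add: assms)

lemma lin_rec2_mult_initial: "c * lin_rec2 p q a b i = lin_rec2 p q (c * a) (c * b) i"
  by (rule lin_rec2_unique) (simp_all add: algebra_simps)

lemma lin_rec2_geometric: "c ^ i * lin_rec2 p q a b i = lin_rec2 (c * p) (c\<^sup>2 * q) a (c * b) i"
  by (rule lin_rec2_unique) (simp_all add: algebra_simps power2_eq_square)

lemma lin_rec2_binet:
  fixes m n :: "'a::comm_ring_1"
  shows "\<alpha> * m ^ i + \<beta> * n ^ i = lin_rec2 (m + n) (- (m * n)) (\<alpha> + \<beta>) (\<alpha> * m + \<beta> * n) i"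
  by (rule lin_rec2_unique) (simp_all add: algebra_simps)

lemma g_gf_eqI:
  assumes rec: "\<And>i. G i = (if i = 0 then 1 else 0)
                          + fps_X * (G (Suc i) + (if 2 \<le> i then G (i - 2) else 0))"
  shows "g_gf i = G i"
proof -
  have "\<forall>i. fps_nth (g_gf i) n = fps_nth (G i) n" for n
  proof (induction n)
    case 0
    have "fps_nth (G i) 0 = (if i = 0 then 1 else 0)" for i by (subst rec) simp
    then show ?case by (simp add: g_gf_def b_count_0)
  next
    case (Suc n)
    have "fps_nth (G i) (Suc n)
            = fps_nth (G (Suc i)) n + (if 2 \<le> i then fps_nth (G (i - 2)) n else 0)" for i
      by (subst rec) simp
    with Suc.IH show ?case by (simp add: g_gf_def b_count_Suc)
  qed
  then show ?thesis by (simp add: fps_eq_iff)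
qed

lemma g_gf_eq_lin_rec2:
  fixes B :: "real fps"
  defines "w \<equiv> fps_X * B"
  assumes B: "B = 1 + w ^ 3"
  shows "g_gf i = B * lin_rec2 (w\<^sup>2) w 1 (w\<^sup>2) i"
proof (rule g_gf_eqI)
  have XB: "fps_X * (B * f) = w * f" for f by (simp add: w_def mult.assoc)
  fix i
  consider "i = 0" | "i = 1" | k where "i = Suc (Suc k)"
    by (metis One_nat_def not0_implies_Suc)
  then show "B * lin_rec2 (w\<^sup>2) w 1 (w\<^sup>2) i = (if i = 0 then 1 else 0)
      + fps_X * (B * lin_rec2 (w\<^sup>2) w 1 (w\<^sup>2) (Suc i)
                 + (if 2 \<le> i then B * lin_rec2 (w\<^sup>2) w 1 (w\<^sup>2) (i - 2) else 0))"
    by cases (simp_all add: distrib_left XB,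
        simp_all add: B algebra_simps power2_eq_square power3_eq_cube power_numeral_reduce)
qed

lemma inverse_one_minus_cubic_root:
  fixes U Y :: "'a::field fps"
  assumes "fps_nth U 0 = 0" and cubic: "U * (1 - U)\<^sup>2 = Y"
  shows "inverse (1 - U) = 1 + Y * inverse (1 - U) ^ 3"
proof -
  define B where "B = inverse (1 - U)"
  have inv: "B * (1 - U) = 1" unfolding B_def using assms(1) by (intro inverse_mult_eq_1) simp
  have "Y * B ^ 3 = U * B * ((1 - U) * B)\<^sup>2" unfolding cubic[symmetric]
    by (simp add: algebra_simps power2_eq_square power3_eq_cube)
  also have "\<dots> = U * B" using inv by (simp add: mult.commute)
  also have "\<dots> = B - 1" using inv by (simp add: algebra_simps)
  finally show ?thesis unfolding B_def by simp
qed

lemma cubic_compose_X_cube: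
  fixes T :: "'a::field fps"
  assumes "T * (1 - T)\<^sup>2 = fps_X"
  shows "(T oo fps_X ^ 3) * (1 - (T oo fps_X ^ 3))\<^sup>2 = fps_X ^ 3"
proof -
  have X3: "fps_nth (fps_X ^ 3 :: 'a fps) 0 = 0" by simp
  have "(T * (1 - T)\<^sup>2) oo fps_X ^ 3 = fps_X ^ 3" using assms X3 by simp
  then show ?thesis using X3
    by (simp add: fps_compose_mult_distrib fps_compose_power[symmetric] fps_compose_sub_distrib)
qed

definition fib_poly :: "'a::comm_semiring_1 \<Rightarrow> 'a \<Rightarrow> nat \<Rightarrow> 'a" where
  "fib_poly a b = lin_rec2 a b 1 a"

definition fib_poly_term :: "'a::comm_semiring_1 \<Rightarrow> 'a \<Rightarrow> nat \<Rightarrow> nat \<Rightarrow> 'a" where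
  "fib_poly_term a b n k = of_nat ((n - k) choose k) * a ^ (n - 2 * k) * b ^ k"

lemma fib_poly_term_eq_0: "n < 2 * k \<Longrightarrow> fib_poly_term a b n k = 0"
  by (simp add: fib_poly_term_def binomial_eq_0)

lemma fib_poly_term_Suc_Suc:
  assumes "k \<le> n"
  shows "fib_poly_term a b (Suc (Suc n)) (Suc k)
           = a * fib_poly_term a b (Suc n) (Suc k) + b * fib_poly_term a b n k"
proof (cases "2 * k < n")
  case True
  then have "n - 2 * k = Suc (n - 2 * k - 1)" "Suc n - k = Suc (n - k)" by simp_all
  then show ?thesis unfolding fib_poly_term_def by (simp add: algebra_simps numeral_2_eq_2)
next
  case False
  then have "(n - k) choose (Suc k) = 0" by (simp add: binomial_eq_0)
  moreover have "Suc n - k = Suc (n - k)" using assms by simp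
  ultimately show ?thesis
    unfolding fib_poly_term_def by (simp add: algebra_simps del: binomial_eq_0_iff)
qed

lemma fib_poly_eq_sum:
  "fib_poly a b n = (\<Sum>k\<in>{0..n div 2}. of_nat ((n - k) choose k) * a ^ (n - 2 * k) * b ^ k)"
proof -
  have "(\<Sum>k\<le>n. fib_poly_term a b n k) = lin_rec2 a b 1 a n"
  proof (rule lin_rec2_unique)
    fix n
    have "(\<Sum>k\<le>Suc (Suc n). fib_poly_term a b (Suc (Suc n)) k)
        = fib_poly_term a b (Suc (Suc n)) 0 + (\<Sum>k\<le>n. fib_poly_term a b (Suc (Suc n)) (Suc k))"
      by (subst sum.atMost_Suc_shift) (simp add: fib_poly_term_eq_0)
    also have "\<dots> = a * fib_poly_term a b (Suc n) 0
                    + (\<Sum>k\<le>n. a * fib_poly_term a b (Suc n) (Suc k) + b * fib_poly_term a b n k)"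
      by (simp add: fib_poly_term_Suc_Suc fib_poly_term_def[of _ _ _ 0])
    also have "\<dots> = a * (\<Sum>k\<le>Suc n. fib_poly_term a b (Suc n) k)
                    + b * (\<Sum>k\<le>n. fib_poly_term a b n k)"
      by (simp add: sum.atMost_Suc_shift sum.distrib sum_distrib_left distrib_left add.assoc
          del: sum.atMost_Suc)
    finally show "(\<Sum>k\<le>Suc (Suc n). fib_poly_term a b (Suc (Suc n)) k)
        = a * (\<Sum>k\<le>Suc n. fib_poly_term a b (Suc n) k) + b * (\<Sum>k\<le>n. fib_poly_term a b n k)" .
  qed (simp_all add: fib_poly_term_def)
  moreover have "(\<Sum>k\<in>{0..n div 2}. fib_poly_term a b n k) = (\<Sum>k\<le>n. fib_poly_term a b n k)"
    by (rule sum.mono_neutral_left) (auto intro: fib_poly_term_eq_0)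
  ultimately show ?thesis by (simp add: fib_poly_def fib_poly_term_def)
qed

lemma binomial_sum_eq_fib_poly:
  fixes t :: "'a::field"
  shows "(\<Sum>k\<in>{0..i div 2}. (-1) ^ k * of_nat ((i - k) choose k) / (t ^ k * (t - 1) ^ (i - k)))
         = fib_poly (1 / (t - 1)) (- (1 / (t * (t - 1)))) i"
  unfolding fib_poly_eq_sum
proof (rule sum.cong[OF refl])
  fix k assume "k \<in> {0..i div 2}"
  then have "(t - 1) ^ (i - k) = (t - 1) ^ (i - 2 * k) * (t - 1) ^ k"
    by (simp add: power_add[symmetric])
  then show "(-1) ^ k * of_nat ((i - k) choose k) / (t ^ k * (t - 1) ^ (i - k))
       = of_nat ((i - k) choose k) * (1 / (t - 1)) ^ (i - 2 * k) * (- (1 / (t * (t - 1)))) ^ k"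
    by (simp add: power_minus' divide_inverse power_inverse power_mult_distrib mult_ac)
qed

lemma lin_rec2_cubic_rescale:
  fixes t z :: "'a::field"
  assumes t0: "t \<noteq> 0" and t1: "t \<noteq> 1" and cubic: "t * (1 - t)\<^sup>2 = z ^ 3"
  defines "W \<equiv> z / (1 - t)"
  shows "lin_rec2 (W\<^sup>2) W 1 (W\<^sup>2) i / (1 - t)
         = (-1) ^ i * z ^ (2 * i) / (1 - t) ^ (i + 1) * fib_poly (1 / (t - 1)) (- (1 / (t * (t - 1)))) i"
proof -
  define q where "q = - z\<^sup>2 / (1 - t)"
  define a where "a = 1 - t"
  have a: "a \<noteq> 0" "1 - t = a" "t - 1 = - a" using t1 by (auto simp: a_def)
  have "q * (1 / (t - 1)) = W\<^sup>2"
    unfolding q_def W_def a(2,3) using a(1) by (simp add: field_simps power2_eq_square)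
  moreover have "q\<^sup>2 * (- (1 / (t * (t - 1)))) = W"
  proof -
    have "q\<^sup>2 * (- (1 / (t * (t - 1)))) = z * z ^ 3 / (t * a ^ 3)"
      unfolding q_def a(2,3) using t0 a(1) by (simp add: field_simps power2_eq_square power3_eq_cube)
    also have "\<dots> = W" unfolding cubic[symmetric] W_def a(2)
      using t0 a(1) by (simp add: field_simps power2_eq_square power3_eq_cube)
    finally show ?thesis .
  qed
  ultimately have "lin_rec2 (W\<^sup>2) W 1 (W\<^sup>2) i
                     = q ^ i * fib_poly (1 / (t - 1)) (- (1 / (t * (t - 1)))) i"
    by (simp add: fib_poly_def lin_rec2_geometric)
  moreover have "(-1) ^ i * z ^ (2 * i) / (1 - t) ^ (i + 1) = q ^ i / (1 - t)"
    by (simp add: q_def power_divide power_minus' power_mult)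
  ultimately show ?thesis by (simp only: times_divide_eq_left)
qed

text \<open>m2 and m3 are the roots of x^2 - x/(t - 1) + 1/(t (t - 1)), the characteristic
  polynomial of the recurrence of fib_poly (1/(t - 1)) (-1/(t (t - 1))).\<close>

lemma roots_form_eq_fib_poly:
  fixes t s :: "'a::field"
  assumes t0: "t \<noteq> 0" and t1: "t \<noteq> 1" and two: "(2::'a) \<noteq> 0"
    and s: "s\<^sup>2 = 4 * t - 3 * t\<^sup>2"
  defines "m2 \<equiv> (t + s) / (2 * t * (t - 1))" and "m3 \<equiv> (t - s) / (2 * t * (t - 1))"
  shows "(t - 2) * (m2 ^ i + m3 ^ i) + (m2 powi (int i - 1) + m3 powi (int i - 1))
         = (3 * t - 4) * fib_poly (1 / (t - 1)) (- (1 / (t * (t - 1)))) i"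
proof -
  define a where "a = t - 1"
  have a: "a \<noteq> 0" "t - 1 = a" "t = a + 1" using t1 by (auto simp: a_def)
  have four: "(4::'a) \<noteq> 0" using two mult_eq_0_iff[of "2::'a" 2] by simp
  have sum: "m2 + m3 = 1 / (t - 1)"
    unfolding m2_def m3_def a(2) using two four t0 a(1) by (simp add: field_simps)
  have prod: "m2 * m3 = 1 / (t * (t - 1))"
  proof -
    have "(t + s) * (t - s) = 4 * t * a" using s by (simp add: a_def algebra_simps power2_eq_square)
    then show ?thesis unfolding m2_def m3_def a(2) using two four t0 a(1) by (simp add: field_simps)
  qed
  have m0: "m2 \<noteq> 0" "m3 \<noteq> 0" using prod t0 a by auto
  have inv_sum: "1 / m2 + 1 / m3 = t"
  proof -
    have "1 / m2 + 1 / m3 = (m2 + m3) / (m2 * m3)" using m0 by (simp add: field_simps)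
    also have "\<dots> = t" unfolding sum prod a(2) using t0 a(1) by simp
    finally show ?thesis .
  qed
  have "(t - 2) * (m2 ^ i + m3 ^ i) + (m2 powi (int i - 1) + m3 powi (int i - 1))
        = (t - 2 + 1 / m2) * m2 ^ i + (t - 2 + 1 / m3) * m3 ^ i"
    using m0 by (simp add: power_int_diff field_simps)
  also have "\<dots> = lin_rec2 (1 / (t - 1)) (- (1 / (t * (t - 1))))
                        (3 * t - 4) ((3 * t - 4) * (1 / (t - 1))) i"
  proof -
    have "(t - 2 + 1 / m2) + (t - 2 + 1 / m3) = 3 * t - 4"
      using inv_sum by (simp add: algebra_simps)
    moreover have "(t - 2 + 1 / m2) * m2 + (t - 2 + 1 / m3) * m3 = (t - 2) * (m2 + m3) + 2"
      using m0 by (simp add: field_simps)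
    moreover have "(t - 2) * (m2 + m3) + 2 = (3 * t - 4) * (1 / (t - 1))"
      unfolding sum a(2) using a(1) a(3) by (simp add: field_simps)
    ultimately show ?thesis using lin_rec2_binet[of "t - 2 + 1 / m2" m2 i "t - 2 + 1 / m3" m3]
      unfolding sum prod by simp
  qed
  finally show ?thesis by (simp add: fib_poly_def lin_rec2_mult_initial)
qed

context
  fixes \<phi> :: "'a::field \<Rightarrow> 'b::field"
  assumes \<phi>: "is_field_hom \<phi>"
begin

lemma field_hom_one: "\<phi> 1 = 1"
  and field_hom_add: "\<phi> (x + y) = \<phi> x + \<phi> y"
  and field_hom_mult: "\<phi> (x * y) = \<phi> x * \<phi> y"
  using \<phi> by (simp_all add: is_field_hom_def)

lemma field_hom_zero: "\<phi> 0 = 0"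
  using field_hom_add[of 0 0] by (metis add.right_neutral add_left_cancel)

lemma field_hom_uminus: "\<phi> (- x) = - \<phi> x"
  using field_hom_add[of x "- x"] by (metis add.right_inverse field_hom_zero minus_unique)

lemma field_hom_diff: "\<phi> (x - y) = \<phi> x - \<phi> y"
  using field_hom_add[of x "- y"] by (simp add: field_hom_uminus)

lemma field_hom_power: "\<phi> (x ^ n) = \<phi> x ^ n"
  by (induction n) (simp_all add: field_hom_one field_hom_mult)

lemma field_hom_of_nat: "\<phi> (of_nat n) = of_nat n"
  by (induction n) (simp_all add: field_hom_zero field_hom_one field_hom_add)

lemma field_hom_numeral: "\<phi> (numeral n) = numeral n"
  using field_hom_of_nat[of "numeral n"] by simp

lemma field_hom_nonzero: "x \<noteq> 0 \<Longrightarrow> \<phi> x \<noteq> 0"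
  using field_hom_mult[of x "inverse x"] by (auto simp: field_hom_one)

lemma field_hom_divide: "\<phi> (x / y) = \<phi> x / \<phi> y"
proof (cases "y = 0")
  case False
  then have "\<phi> (x / y) * \<phi> y = \<phi> x" by (simp flip: field_hom_mult)
  with False show ?thesis by (simp add: field_hom_nonzero eq_divide_eq)
qed (simp add: field_hom_zero)

lemmas field_hom_simps = field_hom_one field_hom_add field_hom_mult field_hom_zero field_hom_uminus
  field_hom_diff field_hom_power field_hom_numeral field_hom_divide

end

lemma fls_compose_X_cube_root:
  fixes T :: "'a::field_char_0 fps"
  assumes T0: "fps_nth T 0 = 0" and cubic: "T * (1 - T)\<^sup>2 = fps_X"
  defines "t \<equiv> fps_to_fls (T oo fps_X ^ 3)"
  shows "t * (1 - t)\<^sup>2 = fls_X ^ 3" "t \<noteq> 0" "t \<noteq> 1" "3 * t - 4 \<noteq> 0"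
proof -
  define U where "U = T oo fps_X ^ 3"
  have U0: "fps_nth U 0 = 0" using T0 by (simp add: U_def)
  have "fps_to_fls (U * (1 - U)\<^sup>2) = fps_to_fls (fps_X ^ 3)"
    using cubic_compose_X_cube[OF cubic] by (simp add: U_def)
  then show "t * (1 - t)\<^sup>2 = fls_X ^ 3"
    by (simp add: t_def U_def[symmetric] fls_times_fps_to_fls fps_to_fls_power)
  then show "t \<noteq> 0" by auto
  have "U \<noteq> 1" using U0 by (metis fps_one_nth one_neq_zero)
  then show "t \<noteq> 1" by (simp add: t_def U_def[symmetric])
  have "fps_nth (3 * U - 4) 0 \<noteq> 0" using U0 by simp
  then have "3 * U - 4 \<noteq> 0" by (metis fps_zero_nth)
  moreover have "3 * t - 4 = fps_to_fls (3 * U - 4)"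
    by (simp add: t_def U_def[symmetric] fls_times_fps_to_fls)
  ultimately show "3 * t - 4 \<noteq> 0" by (metis fps_to_fls_eq_0_iff)
qed

lemma fps_to_fls_g_gf:
  fixes T :: "real fps"
  assumes T0: "fps_nth T 0 = 0" and cubic: "T * (1 - T)\<^sup>2 = fps_X"
  defines "t \<equiv> fps_to_fls (T oo fps_X ^ 3)"
  defines "W \<equiv> fls_X / (1 - t)"
  shows "fps_to_fls (g_gf i) = lin_rec2 (W\<^sup>2) W 1 (W\<^sup>2) i / (1 - t)"
proof -
  define U where "U = T oo fps_X ^ 3"
  define B where "B = inverse (1 - U)"
  have U0: "fps_nth U 0 = 0" using T0 by (simp add: U_def)
  have "B = 1 + (fps_X * B) ^ 3"
    using inverse_one_minus_cubic_root[OF U0 cubic_compose_X_cube[OF cubic, folded U_def]]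
    by (simp add: B_def power_mult_distrib)
  then have g: "g_gf i = B * lin_rec2 ((fps_X * B)\<^sup>2) (fps_X * B) 1 ((fps_X * B)\<^sup>2) i"
    by (rule g_gf_eq_lin_rec2)
  have "subdegree (1 - U) = 0" using U0 by (simp add: subdegree_eq_0_iff)
  then have "inverse (1 - t) = fps_to_fls B"
    unfolding t_def B_def U_def[symmetric] by (simp flip: fls_inverse_fps_to_fls)
  then have B: "fps_to_fls B = 1 / (1 - t)" by (simp add: inverse_eq_divide)
  have "fps_to_fls (g_gf i) = fps_to_fls B
           * lin_rec2 ((fps_to_fls (fps_X * B))\<^sup>2) (fps_to_fls (fps_X * B)) 1
                      ((fps_to_fls (fps_X * B))\<^sup>2) i"
    unfolding g fls_times_fps_to_fls
    by (subst lin_rec2_hom[where f = fps_to_fls])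
      (simp_all add: fls_times_fps_to_fls fps_to_fls_power)
  also have "fps_to_fls (fps_X * B) = W" by (simp add: W_def B fls_times_fps_to_fls)
  finally show ?thesis by (simp add: B)
qed

lemma g_gf_binomial_form:
  fixes T :: "real fps"
  assumes T0: "fps_nth T 0 = 0" and cubic: "T * (1 - T)\<^sup>2 = fps_X"
  defines "t \<equiv> fps_to_fls (T oo fps_X ^ 3)"
  shows "fps_to_fls (g_gf i)
           = (-1) ^ i * fls_X ^ (2 * i) / (1 - t) ^ (i + 1)
             * (\<Sum>k\<in>{0..i div 2}. (-1) ^ k * of_nat ((i - k) choose k) / (t ^ k * (t - 1) ^ (i - k)))"
  using fls_compose_X_cube_root[OF T0 cubic]
  unfolding fps_to_fls_g_gf[OF T0 cubic] binomial_sum_eq_fib_poly t_def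
  by (intro lin_rec2_cubic_rescale) simp_all

lemma g_gf_roots_form:
  fixes T :: "real fps" and \<phi> :: "real fls \<Rightarrow> 'b::field"
  assumes T0: "fps_nth T 0 = 0" and cubic: "T * (1 - T)\<^sup>2 = fps_X"
  defines "t \<equiv> fps_to_fls (T oo fps_X ^ 3)"
  assumes \<phi>: "is_field_hom \<phi>" and s: "s\<^sup>2 = \<phi> (4 * t - 3 * t\<^sup>2)"
  defines "m2 \<equiv> (\<phi> t + s) / (2 * \<phi> t * (\<phi> t - 1))"
    and "m3 \<equiv> (\<phi> t - s) / (2 * \<phi> t * (\<phi> t - 1))"
  shows "\<phi> (fps_to_fls (g_gf i))
           = (-1) ^ i * \<phi> fls_X ^ (2 * i) / ((1 - \<phi> t) ^ (i + 1) * (3 * \<phi> t - 4))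
             * ((\<phi> t - 2) * (m2 ^ i + m3 ^ i) + (m2 powi (int i - 1) + m3 powi (int i - 1)))"
proof -
  note root = fls_compose_X_cube_root[OF T0 cubic, folded t_def]
  have "\<phi> t \<noteq> 0" "\<phi> t \<noteq> 1" "(2::'b) \<noteq> 0" "3 * \<phi> t - 4 \<noteq> 0"
    using field_hom_nonzero[OF \<phi>, of t] field_hom_nonzero[OF \<phi>, of "t - 1"]
      field_hom_nonzero[OF \<phi>, of 2] field_hom_nonzero[OF \<phi>, of "3 * t - 4"] root
    by (simp_all add: field_hom_simps[OF \<phi>])
  moreover have "\<phi> t * (1 - \<phi> t)\<^sup>2 = \<phi> fls_X ^ 3" "s\<^sup>2 = 4 * \<phi> t - 3 * (\<phi> t)\<^sup>2"
    using arg_cong[OF root(1), of \<phi>] s by (simp_all add: field_hom_simps[OF \<phi>])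
  moreover have "\<phi> (fps_to_fls (g_gf i))
      = lin_rec2 ((\<phi> fls_X / (1 - \<phi> t))\<^sup>2) (\<phi> fls_X / (1 - \<phi> t)) 1
                 ((\<phi> fls_X / (1 - \<phi> t))\<^sup>2) i / (1 - \<phi> t)"
    unfolding fps_to_fls_g_gf[OF T0 cubic, folded t_def]
    by (simp add: field_hom_simps[OF \<phi>] lin_rec2_hom[where f = \<phi>])
  ultimately show ?thesis unfolding m2_def m3_def
    by (simp add: lin_rec2_cubic_rescale roots_form_eq_fib_poly)
qed

theorem mainTheorem7:
  fixes T :: "real fps" and i :: nat
  assumes T0: "fps_nth T 0 = 0"
    and Teq: "T * (1 - T) ^ 2 = fps_X"
  shows "(let t = fps_to_fls (fps_compose T (fps_X ^ 3)); z = (fls_X :: real fls) in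
           fps_to_fls (g_gf i)
             = (-1) ^ i * z ^ (2 * i) / (1 - t) ^ (i + 1)
               * (\<Sum>k\<in>{0..i div 2}. (-1) ^ k * of_nat ((i - k) choose k)
                                     / (t ^ k * (t - 1) ^ (i - k)))
         \<and> (\<forall>(\<phi> :: real fls \<Rightarrow> 'b::field) s.
              is_field_hom \<phi> \<and> s ^ 2 = \<phi> (4 * t - 3 * t ^ 2) \<longrightarrow>
              (let t' = \<phi> t;
                   m2 = (t' + s) / (2 * t' * (t' - 1));
                   m3 = (t' - s) / (2 * t' * (t' - 1)) in
               \<phi> (fps_to_fls (g_gf i))
                 = (-1) ^ i * \<phi> z ^ (2 * i) / ((1 - t') ^ (i + 1) * (3 * t' - 4))
                   * ((t' - 2) * (m2 ^ i + m3 ^ i)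
                      + (m2 powi (int i - 1) + m3 powi (int i - 1))))))
         \<and> (\<forall>n. fps_nth (g_gf i) n \<noteq> 0 \<longrightarrow> (n + i) mod 3 = 0)"
proof -
  have "\<forall>n. fps_nth (g_gf i) n \<noteq> 0 \<longrightarrow> (n + i) mod 3 = 0"
    by (simp add: g_gf_def b_count_nonzero_imp_mod_3)
  then show ?thesis
    unfolding Let_def using g_gf_binomial_form[OF T0 Teq, of i] g_gf_roots_form[OF T0 Teq, of _ _ i]
    by blast
qed

end
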